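(* Let $(G,+)$ be a metrizable abelian topological group and $\phi:G\to G$, $\phi(x)=-x$. Then the abstract HNN extension $H=\langle G,t\mid txt^{-1}=-x,\ x\in G\rangle$ admits a metrizable SIN group topology extending the topology of $G$ (i.e. with $G$ a topological subgroup of $H$).
   Context: A topological group is SIN if every neighborhood of the identity contains a neighborhood $V$ of the identity with $gVg^{-1}=V$ for all $g$. *)

theory Defs
  imports "HOL-Analysis.Analysis" "HOL-Algebra.Algebra"
begin

definition topological_group :: "('a, 'b) monoid_scheme \<Rightarrow> 'a topology \<Rightarrow> bool" where
  "topological_group G T \<longleftrightarrow>
     group G \<and> topspace T = carrier G \<and>
     continuous_map (prod_topology T T) T (\<lambda>p. fst p \<otimes>\<^bsub>G\<^esub> snd p) \<and>
     continuous_map T T (\<lambda>x. inv\<^bsub>G\<^esub> x)"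

definition is_nbhd :: "'a topology \<Rightarrow> 'a \<Rightarrow> 'a set \<Rightarrow> bool" where
  "is_nbhd T x N \<longleftrightarrow> (\<exists>U. openin T U \<and> x \<in> U \<and> U \<subseteq> N)"

definition SIN_group :: "('a, 'b) monoid_scheme \<Rightarrow> 'a topology \<Rightarrow> bool" where
  "SIN_group G T \<longleftrightarrow> topological_group G T \<and>
     (\<forall>N. is_nbhd T \<one>\<^bsub>G\<^esub> N \<longrightarrow>
        (\<exists>V. is_nbhd T \<one>\<^bsub>G\<^esub> V \<and> V \<subseteq> N \<and>
             (\<forall>g\<in>carrier G. (\<lambda>v. g \<otimes>\<^bsub>G\<^esub> v \<otimes>\<^bsub>G\<^esub> inv\<^bsub>G\<^esub> g) ` V = V)))"

text \<open>Letters: None is the stable letter t, Some x is the generator x of G;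
  the boolean flag is True for the letter itself and False for its formal inverse.\<close>

type_synonym 'a hnn_word = "('a option \<times> bool) list"

definition hnn_letters :: "('a, 'b) monoid_scheme \<Rightarrow> 'a option set" where
  "hnn_letters G = insert None (Some ` carrier G)"

definition hnn_words :: "('a, 'b) monoid_scheme \<Rightarrow> 'a hnn_word set" where
  "hnn_words G = lists (hnn_letters G \<times> UNIV)"

inductive hnn_eq :: "('a, 'b) monoid_scheme \<Rightarrow> 'a hnn_word \<Rightarrow> 'a hnn_word \<Rightarrow> bool"
  for G where
  refl: "w \<in> hnn_words G \<Longrightarrow> hnn_eq G w w"
| sym: "hnn_eq G u v \<Longrightarrow> hnn_eq G v u"
| trans: "hnn_eq G u v \<Longrightarrow> hnn_eq G v w \<Longrightarrow> hnn_eq G u w"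
| ctx: "hnn_eq G u v \<Longrightarrow> p \<in> hnn_words G \<Longrightarrow> q \<in> hnn_words G \<Longrightarrow>
        hnn_eq G (p @ u @ q) (p @ v @ q)"
| cancel: "a \<in> hnn_letters G \<Longrightarrow> hnn_eq G [(a, b), (a, \<not> b)] []"
| mult: "x \<in> carrier G \<Longrightarrow> y \<in> carrier G \<Longrightarrow>
         hnn_eq G [(Some x, True), (Some y, True)] [(Some (x \<otimes>\<^bsub>G\<^esub> y), True)]"
| one: "hnn_eq G [(Some \<one>\<^bsub>G\<^esub>, True)] []"
| conj: "x \<in> carrier G \<Longrightarrow>
         hnn_eq G [(None, True), (Some x, True), (None, False)] [(Some (inv\<^bsub>G\<^esub> x), True)]"

definition hnn_class :: "('a, 'b) monoid_scheme \<Rightarrow> 'a hnn_word \<Rightarrow> 'a hnn_word set" where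
  "hnn_class G w = {v. hnn_eq G w v}"

definition hnn_ext :: "('a, 'b) monoid_scheme \<Rightarrow> 'a hnn_word set monoid" where
  "hnn_ext G = \<lparr>carrier = hnn_words G // {(u, v). hnn_eq G u v},
                monoid.mult = (\<lambda>A B. {w. \<exists>u\<in>A. \<exists>v\<in>B. hnn_eq G (u @ v) w}),
                one = hnn_class G []\<rparr>"

definition hnn_incl :: "('a, 'b) monoid_scheme \<Rightarrow> 'a \<Rightarrow> 'a hnn_word set" where
  "hnn_incl G x = hnn_class G [(Some x, True)]"

end

theory Submission
  imports Defs
begin

text \<open>
  Every element of H has a unique normal form  x t^n  (x in G, n an integer), and
  multiplication of normal forms is that of the semidirect product G \<rtimes> \<int>, where \<int> acts on G
  through the parity of n:  (a, m) (b, n) = (a \<cdot> b^(\<plusminus>1), m + n).  So H is, as a group,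
  the semidirect product G \<rtimes> \<int>.  Give G \<times> \<int> the product of the topology of G with the
  discrete topology and pull it back to H along the normal-form coordinates.  Multiplication and
  inversion of G \<rtimes> \<int> are continuous, so H becomes a topological group homeomorphic to
  G \<times> \<int> (hence metrizable when G is), in which G = G \<times> {0} sits as a topological subgroup.
  The identity has arbitrarily small neighbourhoods W \<times> {0} with W symmetric, and conjugating
  (x, 0) by (a, n) gives (x^(\<plusminus>1), 0); hence these neighbourhoods are conjugation invariant and
  H is SIN.
\<close>

lemma pullback_topology_homeomorphic_maps:
  assumes F_into: "\<And>a. a \<in> A \<Longrightarrow> F a \<in> topspace K \<and> F' (F a) = a"
    and F'_into: "\<And>y. y \<in> topspace K \<Longrightarrow> F' y \<in> A \<and> F (F' y) = y"
  shows "homeomorphic_maps (pullback_topology A F K) K F F'"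
proof -
  have top: "topspace (pullback_topology A F K) = A"
    using F_into by (auto simp: topspace_pullback_topology)
  have "continuous_map (pullback_topology A F K) K F"
    using continuous_map_pullback[OF continuous_map_id[of K], of A F] by (simp add: o_def id_def)
  moreover have "continuous_map K (pullback_topology A F K) F'"
  proof (rule continuous_map_pullback')
    show "continuous_map K K (F \<circ> F')"
      by (rule continuous_map_eq[OF continuous_map_id]) (simp add: F'_into)
    show "topspace K \<subseteq> F' -` A"
      using F'_into by auto
  qed
  ultimately show ?thesis
    unfolding homeomorphic_maps_def using F_into F'_into top by auto
qed

context group
begin

lemma topological_group_pullback:
  assumes F_into: "F ` carrier G \<subseteq> topspace K"
    and F_mult: "\<And>x y. x \<in> carrier G \<Longrightarrow> y \<in> carrier G \<Longrightarrow> F (x \<otimes> y) = m (F x) (F y)"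
    and F_inv: "\<And>x. x \<in> carrier G \<Longrightarrow> F (inv x) = i (F x)"
    and m_cont: "continuous_map (prod_topology K K) K (\<lambda>p. m (fst p) (snd p))"
    and i_cont: "continuous_map K K i"
  shows "topological_group G (pullback_topology (carrier G) F K)"
proof -
  let ?T = "pullback_topology (carrier G) F K"
  have top: "topspace ?T = carrier G"
    using F_into by (auto simp: topspace_pullback_topology)
  have F_cont: "continuous_map ?T K F"
    using continuous_map_pullback[OF continuous_map_id[of K]] by (simp add: o_def id_def)
  have "continuous_map (prod_topology ?T ?T) (prod_topology K K) (\<lambda>p. (F (fst p), F (snd p)))"
    using continuous_map_compose[OF continuous_map_fst[of ?T ?T] F_cont]
      continuous_map_compose[OF continuous_map_snd[of ?T ?T] F_cont]
    by (simp add: continuous_map_paired o_def)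
  from continuous_map_compose[OF this m_cont]
  have "continuous_map (prod_topology ?T ?T) K (\<lambda>p. m (F (fst p)) (F (snd p)))"
    by (simp add: o_def)
  then have "continuous_map (prod_topology ?T ?T) K (F \<circ> (\<lambda>p. fst p \<otimes> snd p))"
    by (rule continuous_map_eq) (auto simp: top F_mult)
  then have mult: "continuous_map (prod_topology ?T ?T) ?T (\<lambda>p. fst p \<otimes> snd p)"
    by (rule continuous_map_pullback') (auto simp: top)
  have "continuous_map ?T K (\<lambda>x. i (F x))"
    using continuous_map_compose[OF F_cont i_cont] by (simp add: o_def)
  then have "continuous_map ?T K (F \<circ> (\<lambda>x. inv x))"
    by (rule continuous_map_eq) (auto simp: top F_inv)
  then have inv: "continuous_map ?T ?T (\<lambda>x. inv x)"
    by (rule continuous_map_pullback') (auto simp: top)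
  show ?thesis
    unfolding topological_group_def using is_group top mult inv by blast
qed

lemma topological_group_symmetric_nbhd:
  assumes T: "topological_group G T" and W: "openin T W" "\<one> \<in> W"
  obtains W' where "openin T W'" "\<one> \<in> W'" "W' \<subseteq> W" "\<And>x. x \<in> W' \<Longrightarrow> inv x \<in> W'"
proof
  have sp: "topspace T = carrier G" and inv_cont: "continuous_map T T (\<lambda>x. inv x)"
    using T by (simp_all add: topological_group_def)
  let ?W' = "W \<inter> {x \<in> topspace T. inv x \<in> W}"
  show "openin T ?W'"
    by (intro openin_Int W(1) openin_continuous_map_preimage[OF inv_cont W(1)])
  show "\<one> \<in> ?W'" "?W' \<subseteq> W"
    using W sp by auto
  show "inv x \<in> ?W'" if "x \<in> ?W'" for x
    using that sp by auto
qed

lemma SIN_groupI: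
  assumes T: "topological_group G T"
    and small: "\<And>U. openin T U \<Longrightarrow> \<one> \<in> U \<Longrightarrow> \<exists>V. is_nbhd T \<one> V \<and> V \<subseteq> U \<and>
                 (\<forall>g\<in>carrier G. \<forall>v\<in>V. g \<otimes> v \<otimes> inv g \<in> V)"
  shows "SIN_group G T"
  unfolding SIN_group_def
proof (intro conjI allI impI T)
  fix N assume "is_nbhd T \<one> N"
  then obtain U where U: "openin T U" "\<one> \<in> U" "U \<subseteq> N"
    by (auto simp: is_nbhd_def)
  obtain V where V: "is_nbhd T \<one> V" "V \<subseteq> U"
    and conj: "\<And>g v. g \<in> carrier G \<Longrightarrow> v \<in> V \<Longrightarrow> g \<otimes> v \<otimes> inv g \<in> V"
    using small[OF U(1,2)] by blast
  have V_carrier: "V \<subseteq> carrier G"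
    using V(2) openin_subset[OF U(1)] T by (auto simp: topological_group_def)
  have "(\<lambda>v. g \<otimes> v \<otimes> inv g) ` V = V" if g: "g \<in> carrier G" for g
  proof
    show "(\<lambda>v. g \<otimes> v \<otimes> inv g) ` V \<subseteq> V"
      using conj g by auto
    show "V \<subseteq> (\<lambda>v. g \<otimes> v \<otimes> inv g) ` V"
    proof
      fix v assume v: "v \<in> V"
      then have "v \<in> carrier G"
        using V_carrier by blast
      then have "v = g \<otimes> (inv g \<otimes> v \<otimes> inv (inv g)) \<otimes> inv g"
        using g by (simp add: m_assoc) (simp add: m_assoc[symmetric])
      moreover have "inv g \<otimes> v \<otimes> inv (inv g) \<in> V"
        using conj[OF inv_closed[OF g] v] .
      ultimately show "v \<in> (\<lambda>v. g \<otimes> v \<otimes> inv g) ` V"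
        by blast
    qed
  qed
  then show "\<exists>V. is_nbhd T \<one> V \<and> V \<subseteq> N \<and> (\<forall>g\<in>carrier G. (\<lambda>v. g \<otimes> v \<otimes> inv g) ` V = V)"
    using V U(3) by blast
qed

end

lemma continuous_map_discrete_cases:
  assumes k: "continuous_map Z (discrete_topology U) k"
    and f: "continuous_map Z Y f" and g: "continuous_map Z Y g"
  shows "continuous_map Z Y (\<lambda>x. if P (k x) then f x else g x)"
proof (rule pasting_lemma[where I = UNIV and T = "\<lambda>b. {x \<in> topspace Z. k x \<in> {u \<in> U. P u = b}}"
      and f = "\<lambda>b. if b then f else g"])
  fix b :: bool
  show "openin Z {x \<in> topspace Z. k x \<in> {u \<in> U. P u = b}}"
    by (rule openin_continuous_map_preimage[OF k]) auto
  show "continuous_map (subtopology Z {x \<in> topspace Z. k x \<in> {u \<in> U. P u = b}}) Y (if b then f else g)"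
    using f g by (auto intro: continuous_map_from_subtopology)
next
  fix x assume "x \<in> topspace Z"
  then show "\<exists>b. b \<in> UNIV \<and> x \<in> {x \<in> topspace Z. k x \<in> {u \<in> U. P u = b}} \<and>
      (if P (k x) then f x else g x) = (if b then f else g) x"
    using continuous_map_image_subset_topspace[OF k] by auto
qed auto

lemma continuous_map_discrete_combine:
  assumes a: "continuous_map Z (discrete_topology U) a"
    and b: "continuous_map Z (discrete_topology V) b"
    and h: "\<And>u v. u \<in> U \<Longrightarrow> v \<in> V \<Longrightarrow> h u v \<in> W"
  shows "continuous_map Z (discrete_topology W) (\<lambda>x. h (a x) (b x))"
proof -
  have ab: "continuous_map Z (discrete_topology (U \<times> V)) (\<lambda>x. (a x, b x))"
    using a b by (simp add: continuous_map_paired prod_topology_discrete_topology)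
  have "continuous_map (discrete_topology (U \<times> V)) (discrete_topology W) (\<lambda>p. h (fst p) (snd p))"
    using h by auto
  from continuous_map_compose[OF ab this] show ?thesis
    by (simp add: o_def)
qed

section \<open>The semidirect product G \<rtimes> \<int> with \<int> acting by inversion\<close>

text \<open>The action of n on G: the identity for even n, inversion for odd n.  In H it is
  conjugation by t^n.\<close>
definition sdp_twist :: "('a, 'b) monoid_scheme \<Rightarrow> int \<Rightarrow> 'a \<Rightarrow> 'a" where
  "sdp_twist G n x = (if even n then x else inv\<^bsub>G\<^esub> x)"

definition sdp_mult :: "('a, 'b) monoid_scheme \<Rightarrow> 'a \<times> int \<Rightarrow> 'a \<times> int \<Rightarrow> 'a \<times> int" where
  "sdp_mult G p q = (fst p \<otimes>\<^bsub>G\<^esub> sdp_twist G (snd p) (fst q), snd p + snd q)"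

definition sdp_inv :: "('a, 'b) monoid_scheme \<Rightarrow> 'a \<times> int \<Rightarrow> 'a \<times> int" where
  "sdp_inv G p = (sdp_twist G (snd p) (inv\<^bsub>G\<^esub> fst p), - snd p)"

context group
begin

lemma sdp_twist_closed [simp]: "x \<in> carrier G \<Longrightarrow> sdp_twist G n x \<in> carrier G"
  by (simp add: sdp_twist_def)

lemma sdp_twist_twist: "x \<in> carrier G \<Longrightarrow> sdp_twist G n (sdp_twist G m x) = sdp_twist G (n + m) x"
  by (simp add: sdp_twist_def)

lemma sdp_twist_one [simp]: "sdp_twist G n \<one> = \<one>"
  by (simp add: sdp_twist_def)

lemma sdp_twist_0 [simp]: "sdp_twist G 0 x = x"
  by (simp add: sdp_twist_def)

lemma sdp_mult_closed: "fst p \<in> carrier G \<Longrightarrow> fst q \<in> carrier G \<Longrightarrow> fst (sdp_mult G p q) \<in> carrier G"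
  by (simp add: sdp_mult_def)

lemma sdp_inv_closed: "fst p \<in> carrier G \<Longrightarrow> fst (sdp_inv G p) \<in> carrier G"
  by (simp add: sdp_inv_def)

lemma sdp_mult_one_left: "fst p \<in> carrier G \<Longrightarrow> sdp_mult G (\<one>, 0) p = p"
  by (simp add: sdp_mult_def)

lemma sdp_inv_mult: "fst p \<in> carrier G \<Longrightarrow> sdp_mult G (sdp_inv G p) p = (\<one>, 0)"
  by (simp add: sdp_mult_def sdp_inv_def sdp_twist_twist sdp_twist_def)

end

context comm_group
begin

text \<open>In an abelian group inversion is an automorphism, so the twist is an action by
  automorphisms and the semidirect product is associative.\<close>
lemma sdp_twist_mult: "x \<in> carrier G \<Longrightarrow> y \<in> carrier G \<Longrightarrow> sdp_twist G n (x \<otimes> y) = sdp_twist G n x \<otimes> sdp_twist G n y"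
  by (simp add: sdp_twist_def inv_mult)

lemma sdp_mult_assoc:
  assumes "fst p \<in> carrier G" "fst q \<in> carrier G" "fst r \<in> carrier G"
  shows "sdp_mult G (sdp_mult G p q) r = sdp_mult G p (sdp_mult G q r)"
  using assms by (simp add: sdp_mult_def sdp_twist_mult sdp_twist_twist m_assoc add.commute add.left_commute)

lemma sdp_conj:
  assumes p: "fst p \<in> carrier G" and x: "x \<in> carrier G"
  shows "sdp_mult G (sdp_mult G p (x, 0)) (sdp_inv G p) = (sdp_twist G (snd p) x, 0)"
proof -
  have cancel: "fst p \<otimes> (y \<otimes> inv (fst p)) = y" if "y \<in> carrier G" for y
    using that p by (metis m_lcomm r_inv r_one inv_closed)
  have "sdp_twist G (snd p + snd p) y = y" for y
    by (simp add: sdp_twist_def)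
  then show ?thesis
    using p x by (simp add: sdp_mult_def sdp_inv_def sdp_twist_twist m_assoc cancel)
qed

end

lemma hnn_words_Cons [simp]: "a # w \<in> hnn_words G \<longleftrightarrow> fst a \<in> hnn_letters G \<and> w \<in> hnn_words G"
  by (cases a) (auto simp: hnn_words_def)

lemma hnn_words_append [simp]: "u @ w \<in> hnn_words G \<longleftrightarrow> u \<in> hnn_words G \<and> w \<in> hnn_words G"
  by (auto simp: hnn_words_def)

lemma hnn_words_Nil [simp]: "[] \<in> hnn_words G"
  by (simp add: hnn_words_def)

lemma hnn_letters_None [simp]: "None \<in> hnn_letters G"
  by (simp add: hnn_letters_def)

lemma hnn_letters_Some [simp]: "Some x \<in> hnn_letters G \<longleftrightarrow> x \<in> carrier G"
  by (auto simp: hnn_letters_def)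

fun letter_value :: "('a, 'b) monoid_scheme \<Rightarrow> 'a option \<times> bool \<Rightarrow> 'a \<times> int" where
  "letter_value G (Some x, True) = (x, 0)"
| "letter_value G (Some x, False) = (inv\<^bsub>G\<^esub> x, 0)"
| "letter_value G (None, True) = (\<one>\<^bsub>G\<^esub>, 1)"
| "letter_value G (None, False) = (\<one>\<^bsub>G\<^esub>, -1)"

fun word_value :: "('a, 'b) monoid_scheme \<Rightarrow> 'a hnn_word \<Rightarrow> 'a \<times> int" where
  "word_value G [] = (\<one>\<^bsub>G\<^esub>, 0)"
| "word_value G (a # w) = sdp_mult G (letter_value G a) (word_value G w)"

definition t_power :: "int \<Rightarrow> 'a hnn_word" where
  "t_power n = (if n \<ge> 0 then replicate (nat n) (None, True) else replicate (nat (- n)) (None, False))"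

definition normal_word :: "'a \<times> int \<Rightarrow> 'a hnn_word" where
  "normal_word p = (Some (fst p), True) # t_power (snd p)"

lemma t_power_words [simp]: "t_power n \<in> hnn_words G"
  by (auto simp: t_power_def hnn_words_def hnn_letters_def)

lemma t_power_succ: "n \<ge> 0 \<Longrightarrow> t_power (n + 1) = (None, True) # t_power n"
  by (simp add: t_power_def nat_add_distrib)

lemma t_power_pred: "n \<le> 0 \<Longrightarrow> t_power (n - 1) = (None, False) # t_power n"
proof -
  assume "n \<le> 0"
  then have "nat (- (n - 1)) = Suc (nat (- n))" by simp
  then show ?thesis using \<open>n \<le> 0\<close> by (auto simp: t_power_def)
qed

context group
begin

lemma letter_value_closed: "fst a \<in> hnn_letters G \<Longrightarrow> fst (letter_value G a) \<in> carrier G"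
  by (cases "(G, a)" rule: letter_value.cases) auto

lemma word_value_closed: "w \<in> hnn_words G \<Longrightarrow> fst (word_value G w) \<in> carrier G"
  by (induction w) (auto simp: sdp_mult_closed letter_value_closed)

lemma word_value_replicate:
  "word_value G (replicate k (None, b)) = (\<one>, if b then int k else - int k)"
  by (induction k) (auto simp: sdp_mult_def sdp_twist_def)

lemma word_value_normal_word: "fst p \<in> carrier G \<Longrightarrow> word_value G (normal_word p) = p"
  by (simp add: normal_word_def t_power_def word_value_replicate sdp_mult_def)

lemma normal_word_words: "fst p \<in> carrier G \<Longrightarrow> normal_word p \<in> hnn_words G"
  by (simp add: normal_word_def)

lemma hnn_eq_words: "hnn_eq G u v \<Longrightarrow> u \<in> hnn_words G \<and> v \<in> hnn_words G"
  by (induction rule: hnn_eq.induct) (auto simp: hnn_words_def hnn_letters_def)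

lemma hnn_eq_append:
  assumes "hnn_eq G u u'" "hnn_eq G v v'"
  shows "hnn_eq G (u @ v) (u' @ v')"
proof -
  have w: "u' \<in> hnn_words G" "v \<in> hnn_words G"
    using hnn_eq_words[OF assms(1)] hnn_eq_words[OF assms(2)] by auto
  have "hnn_eq G ([] @ u @ v) ([] @ u' @ v)"
    by (rule hnn_eq.ctx[OF assms(1)]) (use w in auto)
  moreover have "hnn_eq G (u' @ v @ []) (u' @ v' @ [])"
    by (rule hnn_eq.ctx[OF assms(2)]) (use w in auto)
  ultimately show ?thesis
    using hnn_eq.trans by fastforce
qed

declare hnn_eq.trans [trans]

end

section \<open>Normal forms in the HNN extension\<close>

context group
begin

lemma hnn_eq_cancel_pos: "a \<in> hnn_letters G \<Longrightarrow> hnn_eq G [(a, True), (a, False)] []"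
  using hnn_eq.cancel[of a G True] by simp

lemma hnn_eq_cancel_neg: "a \<in> hnn_letters G \<Longrightarrow> hnn_eq G [(a, False), (a, True)] []"
  using hnn_eq.cancel[of a G False] by simp

lemma hnn_eq_inverse_generator:
  assumes x: "x \<in> carrier G"
  shows "hnn_eq G [(Some x, False)] [(Some (inv x), True)]"
proof -
  have "hnn_eq G ([(Some (inv x), True)] @ []) ([(Some (inv x), True)] @ [(Some x, True), (Some x, False)])"
    using x by (intro hnn_eq_append hnn_eq.refl hnn_eq.sym[OF hnn_eq_cancel_pos]) auto
  also have "[(Some (inv x), True)] @ [(Some x, True), (Some x, False)]
      = [(Some (inv x), True), (Some x, True)] @ [(Some x, False)]"
    by simp
  also have "hnn_eq G \<dots> ([(Some (inv x \<otimes> x), True)] @ [(Some x, False)])"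
    using x by (intro hnn_eq_append hnn_eq.refl hnn_eq.mult) auto
  also have "hnn_eq G \<dots> ([] @ [(Some x, False)])"
    using x by (intro hnn_eq_append hnn_eq.refl) (auto intro: hnn_eq.one)
  finally have "hnn_eq G [(Some (inv x), True)] [(Some x, False)]"
    by simp
  then show ?thesis
    by (rule hnn_eq.sym)
qed

lemma hnn_eq_t_generator:
  assumes g: "g \<in> carrier G"
  shows "hnn_eq G [(None, b), (Some g, True)] [(Some (inv g), True), (None, b)]"
proof (cases b)
  case True
  have "[(None, True), (Some g, True)] = [(None, True), (Some g, True)] @ []"
    by simp
  also have "hnn_eq G \<dots> ([(None, True), (Some g, True)] @ [(None, False), (None, True)])"
    using g by (intro hnn_eq_append hnn_eq.refl hnn_eq.sym[OF hnn_eq_cancel_neg]) auto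
  also have "\<dots> = [(None, True), (Some g, True), (None, False)] @ [(None, True)]"
    by simp
  also have "hnn_eq G \<dots> ([(Some (inv g), True)] @ [(None, True)])"
    using g by (intro hnn_eq_append hnn_eq.refl hnn_eq.conj) auto
  finally show ?thesis
    using True by simp
next
  case False
  have conj: "hnn_eq G [(None, True), (Some (inv g), True), (None, False)] [(Some g, True)]"
    using hnn_eq.conj[of "inv g" G] g by simp
  have "[(None, False), (Some g, True)] = [(None, False)] @ [(Some g, True)]"
    by simp
  also have "hnn_eq G \<dots> ([(None, False)] @ [(None, True), (Some (inv g), True), (None, False)])"
    using g by (intro hnn_eq_append hnn_eq.refl hnn_eq.sym[OF conj]) auto
  also have "\<dots> = [(None, False), (None, True)] @ [(Some (inv g), True), (None, False)]"
    by simp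
  also have "hnn_eq G \<dots> ([] @ [(Some (inv g), True), (None, False)])"
    using g by (intro hnn_eq_append hnn_eq.refl hnn_eq_cancel_neg) auto
  finally show ?thesis
    using False by simp
qed

lemma hnn_eq_t_power:
  "hnn_eq G ((None, b) # t_power n) (t_power (n + (if b then 1 else -1)))"
proof (cases b)
  case True
  show ?thesis
  proof (cases "n \<ge> 0")
    case True
    then show ?thesis using \<open>b\<close> by (simp add: t_power_succ hnn_eq.refl)
  next
    case False
    then have "(None, True) # t_power n = [(None, True), (None, False)] @ t_power (n + 1)"
      using t_power_pred[of "n + 1"] by simp
    also have "hnn_eq G \<dots> ([] @ t_power (n + 1))"
      by (intro hnn_eq_append hnn_eq.refl hnn_eq_cancel_pos) auto
    finally show ?thesis using \<open>b\<close> by simp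
  qed
next
  case False
  show ?thesis
  proof (cases "n \<le> 0")
    case True
    then show ?thesis using \<open>\<not> b\<close> by (simp add: t_power_pred hnn_eq.refl)
  next
    case False
    then have "(None, False) # t_power n = [(None, False), (None, True)] @ t_power (n - 1)"
      using t_power_succ[of "n - 1"] by simp
    also have "hnn_eq G \<dots> ([] @ t_power (n - 1))"
      by (intro hnn_eq_append hnn_eq.refl hnn_eq_cancel_neg) auto
    finally show ?thesis using \<open>\<not> b\<close> by simp
  qed
qed

lemma hnn_eq_letter_normal_word:
  assumes a: "fst a \<in> hnn_letters G" and g: "g \<in> carrier G"
  shows "hnn_eq G (a # normal_word (g, n)) (normal_word (sdp_mult G (letter_value G a) (g, n)))"
proof -
  obtain x b where a_eq: "a = (x, b)"
    by fastforce
  show ?thesis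
  proof (cases x)
    case None
    have "a # normal_word (g, n) = [(None, b), (Some g, True)] @ t_power n"
      using a_eq None by (simp add: normal_word_def)
    also have "hnn_eq G \<dots> ([(Some (inv g), True), (None, b)] @ t_power n)"
      using g by (intro hnn_eq_append hnn_eq.refl hnn_eq_t_generator) auto
    also have "\<dots> = [(Some (inv g), True)] @ ((None, b) # t_power n)"
      by simp
    also have "hnn_eq G \<dots> ([(Some (inv g), True)] @ t_power (n + (if b then 1 else -1)))"
      using g by (intro hnn_eq_append hnn_eq.refl hnn_eq_t_power) auto
    finally show ?thesis
      using a_eq None g by (cases b) (simp_all add: normal_word_def sdp_mult_def sdp_twist_def add.commute)
  next
    case (Some y)
    with a a_eq have y: "y \<in> carrier G" by simp
    let ?y = "if b then y else inv y"
    have y_eq: "hnn_eq G [(Some y, b)] [(Some ?y, True)]"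
      using y by (cases b) (simp_all add: hnn_eq.refl hnn_eq_inverse_generator)
    have "a # normal_word (g, n) = [(Some y, b)] @ ((Some g, True) # t_power n)"
      using a_eq Some by (simp add: normal_word_def)
    also have "hnn_eq G \<dots> ([(Some ?y, True)] @ ((Some g, True) # t_power n))"
      using y_eq g by (intro hnn_eq_append hnn_eq.refl) auto
    also have "\<dots> = [(Some ?y, True), (Some g, True)] @ t_power n"
      by simp
    also have "hnn_eq G \<dots> ([(Some (?y \<otimes> g), True)] @ t_power n)"
      using g y by (intro hnn_eq_append hnn_eq.refl hnn_eq.mult) auto
    finally show ?thesis
      using a_eq Some by (cases b) (simp_all add: normal_word_def sdp_mult_def)
  qed
qed

lemma hnn_eq_normal_word: "w \<in> hnn_words G \<Longrightarrow> hnn_eq G w (normal_word (word_value G w))"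
proof (induction w)
  case Nil
  show ?case
    using hnn_eq.sym[OF hnn_eq.one[of G]] by (simp add: normal_word_def t_power_def)
next
  case (Cons a w)
  then have a: "fst a \<in> hnn_letters G" and w: "w \<in> hnn_words G"
    by auto
  obtain g n where gn: "word_value G w = (g, n)"
    by fastforce
  have g: "g \<in> carrier G"
    using word_value_closed[OF w] gn by simp
  have "hnn_eq G ([a] @ w) ([a] @ normal_word (g, n))"
    using Cons.IH w a gn by (intro hnn_eq_append hnn_eq.refl) auto
  also have "hnn_eq G ([a] @ normal_word (g, n)) (normal_word (sdp_mult G (letter_value G a) (g, n)))"
    using hnn_eq_letter_normal_word[OF a g] by simp
  finally show ?case
    using gn by simp
qed

end

section \<open>The HNN extension is the semidirect product G \<rtimes> \<int>\<close>

definition hnn_coord :: "('a, 'b) monoid_scheme \<Rightarrow> 'a hnn_word set \<Rightarrow> 'a \<times> int" where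
  "hnn_coord G A = word_value G (SOME w. w \<in> A)"

definition hnn_of_coord :: "('a, 'b) monoid_scheme \<Rightarrow> 'a \<times> int \<Rightarrow> 'a hnn_word set" where
  "hnn_of_coord G p = hnn_class G (normal_word p)"

definition hnn_slice :: "('a, 'b) monoid_scheme \<Rightarrow> 'a set \<Rightarrow> 'a hnn_word set set" where
  "hnn_slice G W = {A \<in> carrier (hnn_ext G). hnn_coord G A \<in> W \<times> {0}}"

context comm_group
begin

lemma word_value_append:
  "u \<in> hnn_words G \<Longrightarrow> v \<in> hnn_words G \<Longrightarrow> word_value G (u @ v) = sdp_mult G (word_value G u) (word_value G v)"
  by (induction u) (auto simp: sdp_mult_one_left sdp_mult_assoc letter_value_closed word_value_closed)

text \<open>The value is invariant under the defining relations (this needs G abelian).\<close>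
lemma hnn_eq_word_value: "hnn_eq G u v \<Longrightarrow> word_value G u = word_value G v"
proof (induction rule: hnn_eq.induct)
  case (ctx u v p q)
  then show ?case
    using hnn_eq_words[OF ctx(1)] by (simp add: word_value_append)
next
  case (cancel a b)
  then show ?case
    by (cases a; cases b) (auto simp: sdp_mult_def sdp_twist_def)
qed (auto simp: sdp_mult_def sdp_twist_def)

lemma hnn_eq_iff_word_value:
  assumes u: "u \<in> hnn_words G" and v: "v \<in> hnn_words G"
  shows "hnn_eq G u v \<longleftrightarrow> word_value G u = word_value G v"
proof
  assume "hnn_eq G u v"
  then show "word_value G u = word_value G v"
    by (rule hnn_eq_word_value)
next
  assume "word_value G u = word_value G v"
  then have "hnn_eq G u (normal_word (word_value G v))"
    using hnn_eq_normal_word[OF u] by simp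
  then show "hnn_eq G u v"
    using hnn_eq.sym[OF hnn_eq_normal_word[OF v]] by (rule hnn_eq.trans)
qed

lemma hnn_ext_carrier: "A \<in> carrier (hnn_ext G) \<longleftrightarrow> (\<exists>w\<in>hnn_words G. A = hnn_class G w)"
  by (auto simp: hnn_ext_def quotient_def hnn_class_def)

lemma hnn_class_eq_iff:
  assumes "u \<in> hnn_words G" "v \<in> hnn_words G"
  shows "hnn_class G u = hnn_class G v \<longleftrightarrow> word_value G u = word_value G v"
proof -
  have "hnn_class G u = hnn_class G v \<longleftrightarrow> hnn_eq G u v"
  proof
    assume "hnn_class G u = hnn_class G v"
    moreover have "v \<in> hnn_class G v"
      using assms(2) by (simp add: hnn_class_def hnn_eq.refl)
    ultimately show "hnn_eq G u v"
      unfolding hnn_class_def by blast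
  next
    assume "hnn_eq G u v"
    then show "hnn_class G u = hnn_class G v"
      unfolding hnn_class_def by (blast intro: hnn_eq.sym hnn_eq.trans)
  qed
  then show ?thesis
    using hnn_eq_iff_word_value[OF assms] by simp
qed

lemma hnn_ext_mult_class:
  "u \<in> hnn_words G \<Longrightarrow> v \<in> hnn_words G \<Longrightarrow> hnn_class G u \<otimes>\<^bsub>hnn_ext G\<^esub> hnn_class G v = hnn_class G (u @ v)"
proof -
  assume u: "u \<in> hnn_words G" and v: "v \<in> hnn_words G"
  have "hnn_eq G (u' @ v') w \<Longrightarrow> hnn_eq G u u' \<Longrightarrow> hnn_eq G v v' \<Longrightarrow> hnn_eq G (u @ v) w"
    for u' v' w
    by (metis hnn_eq_append hnn_eq.trans)
  moreover have "hnn_eq G u u" "hnn_eq G v v"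
    using u v by (simp_all add: hnn_eq.refl)
  ultimately show ?thesis
    by (auto simp: hnn_ext_def hnn_class_def)
qed

lemma hnn_ext_one: "\<one>\<^bsub>hnn_ext G\<^esub> = hnn_class G []"
  by (simp add: hnn_ext_def)

lemma hnn_coord_class: "w \<in> hnn_words G \<Longrightarrow> hnn_coord G (hnn_class G w) = word_value G w"
proof -
  assume w: "w \<in> hnn_words G"
  then have "w \<in> hnn_class G w"
    by (simp add: hnn_class_def hnn_eq.refl)
  then have "(SOME v. v \<in> hnn_class G w) \<in> hnn_class G w"
    by (rule someI)
  then have "hnn_eq G w (SOME v. v \<in> hnn_class G w)"
    by (simp add: hnn_class_def)
  from hnn_eq_word_value[OF this] show ?thesis
    unfolding hnn_coord_def by simp
qed

lemma hnn_of_coord_carrier: "fst p \<in> carrier G \<Longrightarrow> hnn_of_coord G p \<in> carrier (hnn_ext G)"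
  unfolding hnn_of_coord_def hnn_ext_carrier using normal_word_words by blast

lemma hnn_coord_of_coord: "fst p \<in> carrier G \<Longrightarrow> hnn_coord G (hnn_of_coord G p) = p"
  by (simp add: hnn_of_coord_def hnn_coord_class normal_word_words word_value_normal_word)

lemma hnn_coord_closed: "A \<in> carrier (hnn_ext G) \<Longrightarrow> fst (hnn_coord G A) \<in> carrier G"
  by (auto simp: hnn_ext_carrier hnn_coord_class word_value_closed)

lemma hnn_of_coord_coord:
  assumes "A \<in> carrier (hnn_ext G)"
  shows "hnn_of_coord G (hnn_coord G A) = A"
proof -
  obtain w where w: "w \<in> hnn_words G" "A = hnn_class G w"
    using assms by (auto simp: hnn_ext_carrier)
  have "hnn_class G (normal_word (word_value G w)) = hnn_class G w"
    using w(1) by (simp add: hnn_class_eq_iff normal_word_words word_value_closed word_value_normal_word)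
  then show ?thesis
    using w by (simp add: hnn_of_coord_def hnn_coord_class)
qed

lemma hnn_coord_mult:
  "A \<in> carrier (hnn_ext G) \<Longrightarrow> B \<in> carrier (hnn_ext G) \<Longrightarrow>
     hnn_coord G (A \<otimes>\<^bsub>hnn_ext G\<^esub> B) = sdp_mult G (hnn_coord G A) (hnn_coord G B)"
  by (auto simp: hnn_ext_carrier hnn_coord_class hnn_ext_mult_class word_value_append)

lemma hnn_coord_one: "hnn_coord G \<one>\<^bsub>hnn_ext G\<^esub> = (\<one>, 0)"
  by (simp add: hnn_ext_one hnn_coord_class)

lemma hnn_ext_mult_closed:
  "A \<in> carrier (hnn_ext G) \<Longrightarrow> B \<in> carrier (hnn_ext G) \<Longrightarrow> A \<otimes>\<^bsub>hnn_ext G\<^esub> B \<in> carrier (hnn_ext G)"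
  by (auto simp: hnn_ext_carrier hnn_ext_mult_class)

lemma hnn_ext_one_closed: "\<one>\<^bsub>hnn_ext G\<^esub> \<in> carrier (hnn_ext G)"
  by (auto simp: hnn_ext_carrier hnn_ext_one)

lemma hnn_coord_inj:
  "A \<in> carrier (hnn_ext G) \<Longrightarrow> B \<in> carrier (hnn_ext G) \<Longrightarrow> hnn_coord G A = hnn_coord G B \<Longrightarrow> A = B"
  by (metis hnn_of_coord_coord)

lemma hnn_of_coord_inv_mult:
  assumes A: "A \<in> carrier (hnn_ext G)"
  shows "hnn_of_coord G (sdp_inv G (hnn_coord G A)) \<otimes>\<^bsub>hnn_ext G\<^esub> A = \<one>\<^bsub>hnn_ext G\<^esub>"
proof (rule hnn_coord_inj)
  let ?B = "hnn_of_coord G (sdp_inv G (hnn_coord G A))"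
  have B: "?B \<in> carrier (hnn_ext G)"
    using A by (simp add: hnn_of_coord_carrier sdp_inv_closed hnn_coord_closed)
  then show "?B \<otimes>\<^bsub>hnn_ext G\<^esub> A \<in> carrier (hnn_ext G)"
    using A by (rule hnn_ext_mult_closed)
  show "hnn_coord G (?B \<otimes>\<^bsub>hnn_ext G\<^esub> A) = hnn_coord G \<one>\<^bsub>hnn_ext G\<^esub>"
    using A B by (simp add: hnn_coord_mult hnn_coord_of_coord sdp_inv_closed hnn_coord_closed
        sdp_inv_mult hnn_coord_one)
qed (rule hnn_ext_one_closed)

text \<open>Since the coordinates are injective and multiplicative, the group axioms of H follow from
  those of G \<rtimes> \<int>.\<close>
lemma hnn_ext_group: "group (hnn_ext G)"
proof (rule groupI)
  fix A B C assume "A \<in> carrier (hnn_ext G)" "B \<in> carrier (hnn_ext G)" "C \<in> carrier (hnn_ext G)"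
  then show "A \<otimes>\<^bsub>hnn_ext G\<^esub> B \<otimes>\<^bsub>hnn_ext G\<^esub> C = A \<otimes>\<^bsub>hnn_ext G\<^esub> (B \<otimes>\<^bsub>hnn_ext G\<^esub> C)"
    by (auto simp: hnn_ext_carrier hnn_ext_mult_class)
next
  fix A assume "A \<in> carrier (hnn_ext G)"
  then show "\<one>\<^bsub>hnn_ext G\<^esub> \<otimes>\<^bsub>hnn_ext G\<^esub> A = A"
    by (auto simp: hnn_ext_carrier hnn_ext_mult_class hnn_ext_one)
next
  fix A assume A: "A \<in> carrier (hnn_ext G)"
  then show "\<exists>B\<in>carrier (hnn_ext G). B \<otimes>\<^bsub>hnn_ext G\<^esub> A = \<one>\<^bsub>hnn_ext G\<^esub>"
    using hnn_of_coord_inv_mult hnn_of_coord_carrier sdp_inv_closed hnn_coord_closed by blast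
qed (auto intro: hnn_ext_mult_closed hnn_ext_one_closed)

lemma hnn_coord_inv:
  assumes A: "A \<in> carrier (hnn_ext G)"
  shows "hnn_coord G (inv\<^bsub>hnn_ext G\<^esub> A) = sdp_inv G (hnn_coord G A)"
proof -
  have B: "fst (sdp_inv G (hnn_coord G A)) \<in> carrier G"
    using A by (simp add: sdp_inv_closed hnn_coord_closed)
  have "inv\<^bsub>hnn_ext G\<^esub> A = hnn_of_coord G (sdp_inv G (hnn_coord G A))"
    using group.inv_equality[OF hnn_ext_group hnn_of_coord_inv_mult[OF A] A hnn_of_coord_carrier[OF B]] .
  then show ?thesis
    using B by (simp add: hnn_coord_of_coord)
qed

lemma hnn_incl_eq: "hnn_incl G x = hnn_of_coord G (x, 0)"
  by (simp add: hnn_incl_def hnn_of_coord_def normal_word_def t_power_def)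

lemma hnn_incl_hom: "hnn_incl G \<in> hom G (hnn_ext G)"
proof (rule homI)
  fix x assume "x \<in> carrier G"
  then show "hnn_incl G x \<in> carrier (hnn_ext G)"
    by (simp add: hnn_incl_eq hnn_of_coord_carrier)
next
  fix x y assume "x \<in> carrier G" "y \<in> carrier G"
  then show "hnn_incl G (x \<otimes> y) = hnn_incl G x \<otimes>\<^bsub>hnn_ext G\<^esub> hnn_incl G y"
    by (simp add: hnn_incl_def hnn_ext_mult_class hnn_class_eq_iff sdp_mult_def)
qed

lemma hnn_coord_conj:
  assumes g: "g \<in> carrier (hnn_ext G)" and A: "A \<in> carrier (hnn_ext G)"
    and A0: "snd (hnn_coord G A) = 0"
  shows "hnn_coord G (g \<otimes>\<^bsub>hnn_ext G\<^esub> A \<otimes>\<^bsub>hnn_ext G\<^esub> inv\<^bsub>hnn_ext G\<^esub> g)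
      = (sdp_twist G (snd (hnn_coord G g)) (fst (hnn_coord G A)), 0)"
proof -
  have A_eq: "hnn_coord G A = (fst (hnn_coord G A), 0)"
    using A0 by (simp add: prod_eq_iff)
  have "hnn_coord G (g \<otimes>\<^bsub>hnn_ext G\<^esub> A \<otimes>\<^bsub>hnn_ext G\<^esub> inv\<^bsub>hnn_ext G\<^esub> g)
      = sdp_mult G (sdp_mult G (hnn_coord G g) (hnn_coord G A)) (sdp_inv G (hnn_coord G g))"
    using g A by (simp add: hnn_coord_mult hnn_coord_inv hnn_ext_mult_closed group.inv_closed[OF hnn_ext_group])
  also have "\<dots> = (sdp_twist G (snd (hnn_coord G g)) (fst (hnn_coord G A)), 0)"
    using sdp_conj[OF hnn_coord_closed[OF g] hnn_coord_closed[OF A]] A_eq by simp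
  finally show ?thesis .
qed

lemma hnn_slice_conj:
  assumes W: "\<And>x. x \<in> W \<Longrightarrow> inv x \<in> W"
    and g: "g \<in> carrier (hnn_ext G)" and A: "A \<in> hnn_slice G W"
  shows "g \<otimes>\<^bsub>hnn_ext G\<^esub> A \<otimes>\<^bsub>hnn_ext G\<^esub> inv\<^bsub>hnn_ext G\<^esub> g \<in> hnn_slice G W"
proof -
  have A': "A \<in> carrier (hnn_ext G)" "fst (hnn_coord G A) \<in> W" "snd (hnn_coord G A) = 0"
    using A by (auto simp: hnn_slice_def mem_Times_iff)
  have "sdp_twist G n (fst (hnn_coord G A)) \<in> W" for n
    using A'(2) W by (simp add: sdp_twist_def)
  then show ?thesis
    using hnn_coord_conj[OF g A'(1,3)] g A'(1)
    by (simp add: hnn_slice_def hnn_ext_mult_closed group.inv_closed[OF hnn_ext_group])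
qed

end

section \<open>The topology of H\<close>

definition sdp_topology :: "'a topology \<Rightarrow> ('a \<times> int) topology" where
  "sdp_topology T = prod_topology T (discrete_topology UNIV)"

definition hnn_topology :: "('a, 'b) monoid_scheme \<Rightarrow> 'a topology \<Rightarrow> 'a hnn_word set topology" where
  "hnn_topology G T = pullback_topology (carrier (hnn_ext G)) (hnn_coord G) (sdp_topology T)"

locale abelian_topological_group = comm_group +
  fixes T :: "'a topology"
  assumes topological_group: "topological_group G T"
begin

lemma topspace_eq: "topspace T = carrier G"
  using topological_group by (simp add: topological_group_def)

lemma topspace_sdp_topology: "topspace (sdp_topology T) = carrier G \<times> UNIV"
  by (simp add: sdp_topology_def topspace_eq)

lemma sdp_twist_continuous:
  assumes k: "continuous_map Z (discrete_topology U) k" and f: "continuous_map Z T f"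
  shows "continuous_map Z T (\<lambda>z. sdp_twist G (k z) (f z))"
proof -
  have "continuous_map T T (\<lambda>x. inv x)"
    using topological_group by (simp add: topological_group_def)
  from continuous_map_compose[OF f this]
  have "continuous_map Z T (\<lambda>z. inv (f z))"
    by (simp add: o_def)
  then show ?thesis
    unfolding sdp_twist_def by (rule continuous_map_discrete_cases[where P = even, OF k f])
qed

lemma sdp_mult_continuous:
  "continuous_map (prod_topology (sdp_topology T) (sdp_topology T)) (sdp_topology T)
     (\<lambda>pq. sdp_mult G (fst pq) (snd pq))"
proof -
  let ?D = "discrete_topology (UNIV :: int set)"
  let ?X = "prod_topology (prod_topology T ?D) (prod_topology T ?D)"
  have x1: "continuous_map ?X T (\<lambda>pq. fst (fst pq))"
    using continuous_map_compose[OF continuous_map_fst continuous_map_fst[of T ?D]] by (simp add: o_def)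
  have x2: "continuous_map ?X T (\<lambda>pq. fst (snd pq))"
    using continuous_map_compose[OF continuous_map_snd continuous_map_fst[of T ?D]] by (simp add: o_def)
  have n1: "continuous_map ?X ?D (\<lambda>pq. snd (fst pq))"
    using continuous_map_compose[OF continuous_map_fst continuous_map_snd[of T ?D]] by (simp add: o_def)
  have n2: "continuous_map ?X ?D (\<lambda>pq. snd (snd pq))"
    using continuous_map_compose[OF continuous_map_snd continuous_map_snd[of T ?D]] by (simp add: o_def)
  have pair: "continuous_map ?X (prod_topology T T)
      (\<lambda>pq. (fst (fst pq), sdp_twist G (snd (fst pq)) (fst (snd pq))))"
    using x1 sdp_twist_continuous[OF n1 x2] by (simp add: continuous_map_paired)
  have "continuous_map (prod_topology T T) T (\<lambda>p. fst p \<otimes> snd p)"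
    using topological_group by (simp add: topological_group_def)
  from continuous_map_compose[OF pair this]
  have "continuous_map ?X T (\<lambda>pq. fst (fst pq) \<otimes> sdp_twist G (snd (fst pq)) (fst (snd pq)))"
    by (simp add: o_def)
  moreover have "continuous_map ?X ?D (\<lambda>pq. snd (fst pq) + snd (snd pq))"
    by (rule continuous_map_discrete_combine[OF n1 n2]) simp
  ultimately show ?thesis
    by (simp add: sdp_topology_def sdp_mult_def continuous_map_paired)
qed

lemma sdp_inv_continuous: "continuous_map (sdp_topology T) (sdp_topology T) (sdp_inv G)"
proof -
  let ?D = "discrete_topology (UNIV :: int set)"
  have "continuous_map T T (\<lambda>x. inv x)"
    using topological_group by (simp add: topological_group_def)
  from continuous_map_compose[OF continuous_map_fst[of T ?D] this]
  have x: "continuous_map (prod_topology T ?D) T (\<lambda>p. inv (fst p))"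
    by (simp add: o_def)
  have n: "continuous_map (prod_topology T ?D) ?D snd"
    by (rule continuous_map_snd)
  from continuous_map_compose[OF n, of ?D uminus]
  have "continuous_map (prod_topology T ?D) ?D (\<lambda>p. - snd p)"
    by (simp add: o_def)
  moreover have "sdp_inv G = (\<lambda>p. (sdp_twist G (snd p) (inv (fst p)), - snd p))"
    by (simp add: fun_eq_iff sdp_inv_def)
  ultimately show ?thesis
    using sdp_twist_continuous[OF n x] by (simp add: sdp_topology_def continuous_map_paired)
qed

lemma hnn_coord_homeomorphic_maps:
  "homeomorphic_maps (hnn_topology G T) (sdp_topology T) (hnn_coord G) (hnn_of_coord G)"
  unfolding hnn_topology_def
  by (rule pullback_topology_homeomorphic_maps)
    (auto simp: topspace_sdp_topology mem_Times_iff hnn_coord_closed hnn_of_coord_coord hnn_of_coord_carrier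
      hnn_coord_of_coord)

lemma hnn_coord_homeomorphic_map: "homeomorphic_map (hnn_topology G T) (sdp_topology T) (hnn_coord G)"
  using hnn_coord_homeomorphic_maps homeomorphic_maps_map by blast

lemma hnn_topological_group: "topological_group (hnn_ext G) (hnn_topology G T)"
  unfolding hnn_topology_def
  by (rule group.topological_group_pullback[OF hnn_ext_group, where m = "sdp_mult G" and i = "sdp_inv G"])
    (auto simp: topspace_sdp_topology mem_Times_iff image_subset_iff hnn_coord_closed hnn_coord_mult hnn_coord_inv
      sdp_mult_continuous sdp_inv_continuous)

lemma hnn_metrizable:
  assumes "metrizable_space T"
  shows "metrizable_space (hnn_topology G T)"
proof -
  have "metrizable_space (sdp_topology T)"
    using assms by (simp add: sdp_topology_def metrizable_space_prod_topology)
  then show ?thesis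
    using homeomorphic_metrizable_space[OF homeomorphic_maps_imp_homeomorphic_space[OF hnn_coord_homeomorphic_maps]]
    by simp
qed

lemma hnn_incl_embedding: "embedding_map T (hnn_topology G T) (hnn_incl G)"
proof -
  have "embedding_map T (sdp_topology T) (\<lambda>x. (x, 0))"
    unfolding sdp_topology_def by (simp add: embedding_map_graph)
  moreover have "homeomorphic_map (sdp_topology T) (hnn_topology G T) (hnn_of_coord G)"
    using hnn_coord_homeomorphic_maps by (simp add: homeomorphic_maps_map)
  then have "embedding_map (sdp_topology T) (hnn_topology G T) (hnn_of_coord G)"
    by (simp flip: surjective_embedding_map)
  ultimately have "embedding_map T (hnn_topology G T) (hnn_of_coord G \<circ> (\<lambda>x. (x, 0)))"
    by (rule embedding_map_compose)
  then show ?thesis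
    by (rule embedding_map_eq) (simp add: hnn_incl_eq)
qed

lemma hnn_slice_open:
  assumes "openin T W"
  shows "openin (hnn_topology G T) (hnn_slice G W)"
proof -
  have "openin (sdp_topology T) (W \<times> {0})"
    unfolding sdp_topology_def using assms by (simp add: openin_prod_Times_iff)
  from openin_continuous_map_preimage[OF homeomorphic_imp_continuous_map[OF hnn_coord_homeomorphic_map] this]
  show ?thesis
    using hnn_topological_group by (simp add: hnn_slice_def topological_group_def)
qed

text \<open>Every open neighbourhood of the identity of H contains the image of an open
  neighbourhood of the identity of G, since its coordinate image is open in G \<times> \<int>.\<close>
lemma hnn_open_contains_slice:
  assumes U: "openin (hnn_topology G T) U" "\<one>\<^bsub>hnn_ext G\<^esub> \<in> U"
  obtains W where "openin T W" "\<one> \<in> W" "hnn_slice G W \<subseteq> U"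
proof -
  have U_carrier: "U \<subseteq> carrier (hnn_ext G)"
    using openin_subset[OF U(1)] hnn_topological_group by (simp add: topological_group_def)
  have "openin (sdp_topology T) (hnn_coord G ` U)"
    using homeomorphic_map_openness[OF hnn_coord_homeomorphic_map openin_subset[OF U(1)]] U(1) by simp
  moreover have "(\<one>, 0) \<in> hnn_coord G ` U"
    using U(2) hnn_coord_one by (metis image_eqI)
  ultimately have "\<exists>W N. openin T W \<and> openin (discrete_topology UNIV) N \<and> \<one> \<in> W \<and> 0 \<in> N \<and>
      W \<times> N \<subseteq> hnn_coord G ` U"
    unfolding sdp_topology_def openin_prod_topology_alt by simp
  then obtain W N where W: "openin T W" "\<one> \<in> W" and WN: "0 \<in> N" "W \<times> N \<subseteq> hnn_coord G ` U"
    by blast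
  have "hnn_slice G W \<subseteq> U"
  proof
    fix A assume A: "A \<in> hnn_slice G W"
    then have "hnn_coord G A \<in> W \<times> N"
      using WN(1) by (auto simp: hnn_slice_def)
    with WN(2) have "hnn_coord G A \<in> hnn_coord G ` U" ..
    then obtain B where B: "hnn_coord G A = hnn_coord G B" "B \<in> U"
      by (rule imageE)
    then have "A = B"
      using A U_carrier by (intro hnn_coord_inj[of A B]) (auto simp: hnn_slice_def)
    then show "A \<in> U"
      using B(2) by simp
  qed
  then show ?thesis
    using W that by blast
qed

lemma hnn_SIN: "SIN_group (hnn_ext G) (hnn_topology G T)"
proof (rule group.SIN_groupI[OF hnn_ext_group hnn_topological_group])
  fix U assume "openin (hnn_topology G T) U" "\<one>\<^bsub>hnn_ext G\<^esub> \<in> U"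
  then obtain W where W: "openin T W" "\<one> \<in> W" "hnn_slice G W \<subseteq> U"
    by (rule hnn_open_contains_slice)
  obtain W' where W': "openin T W'" "\<one> \<in> W'" "W' \<subseteq> W" "\<And>x. x \<in> W' \<Longrightarrow> inv x \<in> W'"
    using topological_group_symmetric_nbhd[OF topological_group W(1,2)] by blast
  have "\<one>\<^bsub>hnn_ext G\<^esub> \<in> hnn_slice G W'"
    using W'(2) by (simp add: hnn_slice_def hnn_coord_one hnn_ext_one_closed)
  then have "is_nbhd (hnn_topology G T) \<one>\<^bsub>hnn_ext G\<^esub> (hnn_slice G W')"
    unfolding is_nbhd_def using hnn_slice_open[OF W'(1)] by blast
  moreover have "hnn_slice G W' \<subseteq> hnn_slice G W"
    using W'(3) by (auto simp: hnn_slice_def)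
  then have "hnn_slice G W' \<subseteq> U"
    using W(3) by (rule subset_trans)
  ultimately show "\<exists>V. is_nbhd (hnn_topology G T) \<one>\<^bsub>hnn_ext G\<^esub> V \<and> V \<subseteq> U \<and>
      (\<forall>g\<in>carrier (hnn_ext G). \<forall>v\<in>V. g \<otimes>\<^bsub>hnn_ext G\<^esub> v \<otimes>\<^bsub>hnn_ext G\<^esub> inv\<^bsub>hnn_ext G\<^esub> g \<in> V)"
    using hnn_slice_conj[OF W'(4)] by (intro exI[of _ "hnn_slice G W'"] conjI ballI)
qed

end

theorem mainTheorem16:
  fixes G :: "('a, 'b) monoid_scheme" and TG :: "'a topology"
  assumes "comm_group G"
    and "topological_group G TG"
    and "metrizable_space TG"
  shows "\<exists>TH :: 'a hnn_word set topology.
           SIN_group (hnn_ext G) TH \<and> metrizable_space TH \<and>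
           hnn_incl G \<in> hom G (hnn_ext G) \<and>
           embedding_map TG TH (hnn_incl G)"
proof -
  interpret abelian_topological_group G TG
    using assms(1,2) by (simp add: abelian_topological_group_def abelian_topological_group_axioms_def)
  have "SIN_group (hnn_ext G) (hnn_topology G TG)"
    by (rule hnn_SIN)
  moreover have "metrizable_space (hnn_topology G TG)"
    using assms(3) by (rule hnn_metrizable)
  ultimately show ?thesis
    using hnn_incl_hom hnn_incl_embedding by blast
qed

end
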